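(* Every triangle-free circle intersection graph has a proper vertex coloring with at most $6$ colors.
   Context: A graph $G$ is a circle intersection graph if its vertices can be put in one-to-one correspondence with closed disks (circles) of arbitrary positive radii in the plane so that two vertices are adjacent if and only if the corresponding disks intersect (tangent circles are considered to intersect). A graph is triangle-free if it has no subgraph isomorphic to $K_3$. *)

theory Defs
  imports "HOL-Analysis.Analysis"
begin

definition simple_graph :: "'a set \<Rightarrow> ('a \<Rightarrow> 'a \<Rightarrow> bool) \<Rightarrow> bool" where
  "simple_graph V E \<longleftrightarrow> finite V \<and>
     (\<forall>u v. E u v \<longrightarrow> u \<in> V \<and> v \<in> V) \<and>
     (\<forall>u v. E u v \<longrightarrow> E v u) \<and> (\<forall>v. \<not> E v v)"

definition circle_intersection_graph :: "'a set \<Rightarrow> ('a \<Rightarrow> 'a \<Rightarrow> bool) \<Rightarrow> bool" where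
  "circle_intersection_graph V E \<longleftrightarrow>
     (\<exists>(c :: 'a \<Rightarrow> real^2) (r :: 'a \<Rightarrow> real).
        (\<forall>v\<in>V. r v > 0) \<and>
        inj_on (\<lambda>v. cball (c v) (r v)) V \<and>
        (\<forall>u\<in>V. \<forall>v\<in>V. u \<noteq> v \<longrightarrow>
            (E u v \<longleftrightarrow> cball (c u) (r u) \<inter> cball (c v) (r v) \<noteq> {})))"

definition triangle_free :: "'a set \<Rightarrow> ('a \<Rightarrow> 'a \<Rightarrow> bool) \<Rightarrow> bool" where
  "triangle_free V E \<longleftrightarrow>
     \<not> (\<exists>u\<in>V. \<exists>v\<in>V. \<exists>w\<in>V. E u v \<and> E v w \<and> E u w)"

definition proper_colorable :: "'a set \<Rightarrow> ('a \<Rightarrow> 'a \<Rightarrow> bool) \<Rightarrow> nat \<Rightarrow> bool" where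
  "proper_colorable V E k \<longleftrightarrow>
     (\<exists>col :: 'a \<Rightarrow> nat. (\<forall>v\<in>V. col v < k) \<and>
        (\<forall>u\<in>V. \<forall>v\<in>V. E u v \<longrightarrow> col u \<noteq> col v))"

end

theory Submission
  imports Defs
begin

text \<open>Let \<open>v\<close> be a vertex whose disk has the smallest radius \<open>\<rho>\<close>. The disks of its
  neighbours meet the disk of \<open>v\<close>, have radius at least \<open>\<rho>\<close> and, the graph being
  triangle-free, are pairwise disjoint. Each of them contains a disk of radius \<open>\<rho>\<close> centred
  within \<open>2\<rho>\<close> of the centre of \<open>v\<close>; these centres are pairwise more than \<open>2\<rho>\<close> apart, and
  among six such points two would subtend an angle of at most \<open>\<pi>/3\<close> at the centre and so be
  within \<open>2\<rho>\<close> of each other. Hence \<open>v\<close> has at most five neighbours. As every induced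
  subgraph is again a triangle-free circle intersection graph, the graph is 5-degenerate and
  therefore greedily 6-colourable.\<close>

lemma proper_colorable_extend:
  assumes "proper_colorable (A - {v}) E (Suc k)"
    and "finite A" and "card {u \<in> A. E v u} \<le> k"
    and sym: "\<And>u w. E u w \<Longrightarrow> E w u" and "\<not> E v v"
  shows "proper_colorable A E (Suc k)"
proof -
  obtain col where col_range: "\<And>u. u \<in> A - {v} \<Longrightarrow> col u < Suc k"
    and col_proper: "\<And>u w. u \<in> A - {v} \<Longrightarrow> w \<in> A - {v} \<Longrightarrow> E u w \<Longrightarrow> col u \<noteq> col w"
    using assms(1) unfolding proper_colorable_def by blast
  let ?N = "{u \<in> A. E v u}"
  have "card (col ` ?N) < card {..<Suc k}"
    using card_image_le[of ?N col] assms(2,3) by simp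
  then have "\<not> {..<Suc k} \<subseteq> col ` ?N"
    using card_mono[of "col ` ?N" "{..<Suc k}"] assms(2) by auto
  then obtain i where "i < Suc k" and i_free: "\<And>u. u \<in> A \<Longrightarrow> E v u \<Longrightarrow> col u \<noteq> i"
    by blast
  define col' where "col' = col(v := i)"
  have "col' u < Suc k" if "u \<in> A" for u
    using col_range[of u] that \<open>i < Suc k\<close> by (simp add: col'_def)
  moreover have "col' u \<noteq> col' w" if "u \<in> A" "w \<in> A" "E u w" for u w
  proof (cases "u = v \<or> w = v")
    case True
    then show ?thesis
      using that i_free[of u] i_free[of w] sym[of u w] \<open>\<not> E v v\<close> by (auto simp: col'_def)
  next
    case False
    then show ?thesis
      using that col_proper[of u w] by (simp add: col'_def)
  qed
  ultimately show ?thesis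
    unfolding proper_colorable_def by blast
qed

lemma degenerate_imp_proper_colorable:
  assumes "simple_graph V E"
    and degenerate: "\<And>A. A \<subseteq> V \<Longrightarrow> A \<noteq> {} \<Longrightarrow> \<exists>v\<in>A. card {u \<in> A. E v u} \<le> k"
  shows "proper_colorable V E (Suc k)"
proof -
  have "finite V" and sym: "\<And>u w. E u w \<Longrightarrow> E w u" and irrefl: "\<And>v. \<not> E v v"
    using assms(1) unfolding simple_graph_def by auto
  from \<open>finite V\<close> show ?thesis
  proof (induction rule: finite_remove_induct)
    case empty
    show ?case
      unfolding proper_colorable_def by simp
  next
    case (remove A)
    then obtain v where "v \<in> A" and "card {u \<in> A. E v u} \<le> k"
      using degenerate by blast
    then show ?case
      using proper_colorable_extend[OF remove.IH[OF \<open>v \<in> A\<close>] remove.hyps(1) _ sym irrefl]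
      by blast
  qed
qed

lemma norm_diff_squared_Arg2pi:
  fixes z w :: complex
  shows "(cmod (z - w))\<^sup>2 = (cmod z)\<^sup>2 + (cmod w)\<^sup>2 - 2 * cmod z * cmod w * cos (Arg2pi z - Arg2pi w)"
proof -
  have "(cmod (z - w))\<^sup>2 = (Re z - Re w)\<^sup>2 + (Im z - Im w)\<^sup>2"
    by (simp add: cmod_power2)
  also have "\<dots> = (cmod z)\<^sup>2 * ((cos (Arg2pi z))\<^sup>2 + (sin (Arg2pi z))\<^sup>2)
      + (cmod w)\<^sup>2 * ((cos (Arg2pi w))\<^sup>2 + (sin (Arg2pi w))\<^sup>2)
      - 2 * cmod z * cmod w * (cos (Arg2pi z) * cos (Arg2pi w) + sin (Arg2pi z) * sin (Arg2pi w))"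
    unfolding cos_Arg2pi[of z, symmetric] sin_Arg2pi[of z, symmetric]
      cos_Arg2pi[of w, symmetric] sin_Arg2pi[of w, symmetric]
    by (simp only: power2_eq_square algebra_simps)
  finally show ?thesis
    by (simp add: cos_diff)
qed

lemma norm_diff_le_if_cos_Arg2pi_ge_half:
  fixes z w :: complex
  assumes "cmod z \<le> R" "cmod w \<le> R" "cos (Arg2pi z - Arg2pi w) \<ge> 1/2"
  shows "cmod (z - w) \<le> R"
proof -
  have "(cmod (z - w))\<^sup>2 \<le> (cmod z)\<^sup>2 + (cmod w)\<^sup>2 - cmod z * cmod w"
    using norm_diff_squared_Arg2pi[of z w] mult_left_mono[OF assms(3), of "2 * cmod z * cmod w"]
    by simp
  also have "\<dots> \<le> (max (cmod z) (cmod w))\<^sup>2"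
    by (simp add: max_def power2_eq_square mult_right_mono mult_left_mono)
  also have "\<dots> \<le> R\<^sup>2"
    using assms(1,2) by (intro power_mono) (auto simp: le_max_iff_disj)
  finally show ?thesis
    using assms(1) by (meson norm_ge_zero order_trans power2_le_imp_le)
qed

lemma cos_ge_half_if_abs_le:
  assumes "\<bar>t\<bar> \<le> pi/3"
  shows "cos t \<ge> 1/2"
  using cos_monotone_0_pi_le[of "\<bar>t\<bar>" "pi/3"] assms cos_60 by simp

lemma angles_pigeonhole:
  fixes \<theta> :: "'a \<Rightarrow> real"
  assumes "finite S" "6 \<le> card S" and range: "\<And>x. x \<in> S \<Longrightarrow> 0 \<le> \<theta> x \<and> \<theta> x < 2*pi"
  obtains x y where "x \<in> S" "y \<in> S" "x \<noteq> y" "cos (\<theta> x - \<theta> y) \<ge> 1/2"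
proof -
  have "S \<noteq> {}" using assms(2) by auto
  obtain m where m: "m \<in> S" "\<And>x. x \<in> S \<Longrightarrow> \<theta> m \<le> \<theta> x"
    using assms(1) \<open>S \<noteq> {}\<close> by (metis arg_min_if_finite(1,2) not_less)
  \<comment> \<open>Cut the circle into six arcs of length \<open>\<pi>/3\<close> starting at the smallest angle. Either
    two angles share an arc, or every arc holds exactly one angle and the one in the last arc
    is within \<open>\<pi>/3\<close> of the smallest, going around through \<open>2\<pi>\<close>.\<close>
  define arc where "arc x = \<lfloor>(\<theta> x - \<theta> m) / (pi/3)\<rfloor>" for x
  have arc_bounds: "of_int (arc x) * (pi/3) \<le> \<theta> x - \<theta> m"
    "\<theta> x - \<theta> m < (of_int (arc x) + 1) * (pi/3)" for x
    unfolding arc_def by (simp_all add: floor_divide_lower floor_divide_upper)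
  have arc_range: "arc ` S \<subseteq> {0..5}"
  proof
    fix i assume "i \<in> arc ` S"
    then obtain x where "x \<in> S" "i = arc x" by blast
    then have "0 \<le> (\<theta> x - \<theta> m) / (pi/3)" "(\<theta> x - \<theta> m) / (pi/3) < 6"
      using m range[of x] range[of m] by (auto simp: field_simps)
    then show "i \<in> {0..5}"
      unfolding \<open>i = arc x\<close> arc_def by (auto simp: le_floor_iff floor_le_iff)
  qed
  show ?thesis
  proof (cases "inj_on arc S")
    case False
    then obtain x y where "x \<in> S" "y \<in> S" "x \<noteq> y" "arc x = arc y"
      unfolding inj_on_def by blast
    moreover have "\<bar>\<theta> x - \<theta> y\<bar> \<le> pi/3"
      using arc_bounds[of x] arc_bounds[of y]
      unfolding \<open>arc x = arc y\<close> abs_le_iff distrib_right by linarith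
    ultimately show ?thesis
      using that cos_ge_half_if_abs_le by blast
  next
    case True
    have "card (arc ` S) = card {0..5::int}"
      using card_image[OF True] card_mono[OF _ arc_range] assms(2) by simp
    then have "arc ` S = {0..5}"
      using arc_range by (simp add: card_subset_eq)
    then obtain x where x: "x \<in> S" "arc x = 5"
      by (metis atLeastAtMost_iff imageE order_refl zero_le_numeral)
    have "x \<noteq> m"
      using x(2) by (auto simp: arc_def)
    have "\<bar>2*pi - (\<theta> x - \<theta> m)\<bar> \<le> pi/3"
      using arc_bounds(1)[of x] x range[of x] range[of m] m by simp
    then have "cos (\<theta> x - \<theta> m) \<ge> 1/2"
      using cos_ge_half_if_abs_le cos_2pi_minus by metis
    then show ?thesis
      using that x(1) m(1) \<open>x \<noteq> m\<close> by blast
  qed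
qed

lemma card_separated_subset_cball_complex_le_5:
  fixes S :: "complex set"
  assumes "finite S" "S \<subseteq> cball 0 R"
    and separated: "\<And>z w. z \<in> S \<Longrightarrow> w \<in> S \<Longrightarrow> z \<noteq> w \<Longrightarrow> R < dist z w"
  shows "card S \<le> 5"
proof (rule ccontr)
  assume "\<not> card S \<le> 5"
  then have "6 \<le> card S"
    by simp
  then obtain z w where zw: "z \<in> S" "w \<in> S" "z \<noteq> w" and "cos (Arg2pi z - Arg2pi w) \<ge> 1/2"
    using angles_pigeonhole[OF assms(1), of Arg2pi] Arg2pi by blast
  moreover have "cmod z \<le> R" "cmod w \<le> R"
    using assms(2) zw by auto
  ultimately have "dist z w \<le> R"
    by (simp add: dist_norm norm_diff_le_if_cos_Arg2pi_ge_half)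
  then show False
    using separated[OF zw] by simp
qed

lemma card_separated_subset_cball_le_5:
  fixes S :: "'a::euclidean_space set"
  assumes "DIM('a) \<le> 2" "finite S" "S \<subseteq> cball c R"
    and separated: "\<And>x y. x \<in> S \<Longrightarrow> y \<in> S \<Longrightarrow> x \<noteq> y \<Longrightarrow> R < dist x y"
  shows "card S \<le> 5"
proof -
  obtain f :: "'a \<Rightarrow> complex" where "linear f" and norm_f: "\<And>x. norm (f x) = norm x"
    using isometry_subset_subspace[of "UNIV::'a set" "UNIV::complex set"] assms(1) by auto
  define h where "h x = f (x - c)" for x
  have dist_h: "dist (h x) (h y) = dist x y" for x y
    unfolding h_def dist_norm linear_diff[OF \<open>linear f\<close>, symmetric] norm_f by simp
  then have "inj_on h S"
    by (intro inj_onI) (metis dist_eq_0_iff)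
  have "h ` S \<subseteq> cball 0 R"
    using assms(3) dist_h[of c] by (auto simp: h_def linear_0[OF \<open>linear f\<close>])
  then have "card (h ` S) \<le> 5"
    using assms(2)
    by (intro card_separated_subset_cball_complex_le_5) (auto simp: dist_h intro!: separated)
  then show ?thesis
    using card_image[OF \<open>inj_on h S\<close>] by simp
qed

lemma point_between_at_dist:
  fixes a b :: "'a::real_normed_vector"
  assumes "0 \<le> t" "t \<le> dist a b"
  obtains p where "dist a p = t" "dist p b = dist a b - t"
proof (cases "a = b")
  case True
  then show ?thesis
    using that assms by simp
next
  case False
  define d where "d = dist a b"
  have "0 < d" "t / d \<le> 1"
    using False assms by (simp_all add: d_def)
  define p where "p = a + (t / d) *\<^sub>R (b - a)"
  have "dist a p = t / d * d"
    using assms \<open>0 < d\<close> by (simp add: p_def dist_norm d_def norm_minus_commute)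
  moreover have "dist p b = (1 - t / d) * d"
  proof -
    have "b - p = (1 - t / d) *\<^sub>R (b - a)"
      by (simp add: p_def algebra_simps)
    then show ?thesis
      using \<open>t / d \<le> 1\<close> by (simp add: dist_norm d_def norm_minus_commute dist_commute)
  qed
  ultimately show ?thesis
    using that \<open>0 < d\<close> by (simp add: d_def algebra_simps)
qed

lemma cball_Int_cball_nonempty_iff:
  fixes a b :: "'a::real_normed_vector"
  assumes "0 \<le> r" "0 \<le> s"
  shows "cball a r \<inter> cball b s \<noteq> {} \<longleftrightarrow> dist a b \<le> r + s"
proof
  assume "cball a r \<inter> cball b s \<noteq> {}"
  then obtain x where "dist a x \<le> r" "dist b x \<le> s"
    by auto
  then show "dist a b \<le> r + s"
    using dist_triangle[of a b x] dist_commute[of b x] by linarith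
next
  assume "dist a b \<le> r + s"
  obtain p where "dist a p = min r (dist a b)" "dist p b = dist a b - min r (dist a b)"
    using point_between_at_dist[of "min r (dist a b)" a b] assms by auto
  then have "p \<in> cball a r" "p \<in> cball b s"
    using \<open>dist a b \<le> r + s\<close> assms by (auto simp: dist_commute)
  then show "cball a r \<inter> cball b s \<noteq> {}"
    by blast
qed

lemma card_disjoint_cballs_meeting_cball_le_5:
  fixes c :: "'i \<Rightarrow> 'a::euclidean_space"
  assumes "DIM('a) \<le> 2" "0 \<le> \<rho>"
    and large: "\<And>u. u \<in> N \<Longrightarrow> \<rho> \<le> r u"
    and meets: "\<And>u. u \<in> N \<Longrightarrow> cball (c u) (r u) \<inter> cball c0 \<rho> \<noteq> {}"
    and disjoint: "\<And>u w. u \<in> N \<Longrightarrow> w \<in> N \<Longrightarrow> u \<noteq> w \<Longrightarrow>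
      cball (c u) (r u) \<inter> cball (c w) (r w) = {}"
  shows "card N \<le> 5"
proof (cases "finite N")
  case True
  have "\<exists>q. dist c0 q \<le> 2 * \<rho> \<and> dist q (c u) \<le> r u - \<rho>" if "u \<in> N" for u
  proof -
    have "dist c0 (c u) \<le> r u + \<rho>"
      using meets[OF that] large[OF that] assms(2)
      by (simp add: cball_Int_cball_nonempty_iff dist_commute)
    moreover obtain q where "dist c0 q = min (2 * \<rho>) (dist c0 (c u))"
      "dist q (c u) = dist c0 (c u) - min (2 * \<rho>) (dist c0 (c u))"
      using point_between_at_dist[of "min (2 * \<rho>) (dist c0 (c u))" c0 "c u"] assms(2) by auto
    ultimately show ?thesis
      using large[OF that] by (intro exI[of _ q]) auto
  qed
  then obtain q where near: "\<And>u. u \<in> N \<Longrightarrow> dist c0 (q u) \<le> 2 * \<rho>"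
    and inside: "\<And>u. u \<in> N \<Longrightarrow> dist (q u) (c u) \<le> r u - \<rho>"
    by metis
  have separated: "2 * \<rho> < dist (q u) (q w)" if "u \<in> N" "w \<in> N" "u \<noteq> w" for u w
  proof -
    have "\<not> dist (c u) (c w) \<le> r u + r w"
      using disjoint[OF that] large[OF that(1)] large[OF that(2)] assms(2)
        cball_Int_cball_nonempty_iff[of "r u" "r w" "c u" "c w"] by auto
    moreover have "dist (c u) (c w) \<le> dist (q u) (c u) + dist (q u) (q w) + dist (q w) (c w)"
      using dist_triangle3[of "c u" "c w" "q u"] dist_triangle[of "q u" "c w" "q w"] by linarith
    ultimately show ?thesis
      using inside[OF that(1)] inside[OF that(2)] by linarith
  qed
  then have "inj_on q N"
    using assms(2) by (intro inj_onI) force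
  moreover have "card (q ` N) \<le> 5"
    using True near separated assms(1)
    by (intro card_separated_subset_cball_le_5[where c = c0 and R = "2 * \<rho>"]) auto
  ultimately show ?thesis
    by (simp add: card_image)
qed simp

lemma triangle_free_disk_graph_low_degree_vertex:
  fixes c :: "'v \<Rightarrow> 'a::euclidean_space" and r :: "'v \<Rightarrow> real"
  assumes "DIM('a) \<le> 2" "triangle_free V E" "\<And>v. \<not> E v v"
    and disks: "\<And>u v. u \<in> V \<Longrightarrow> v \<in> V \<Longrightarrow> u \<noteq> v \<Longrightarrow>
      E u v \<longleftrightarrow> cball (c u) (r u) \<inter> cball (c v) (r v) \<noteq> {}"
    and r_nonneg: "\<And>v. v \<in> V \<Longrightarrow> 0 \<le> r v"
    and "finite A" "A \<subseteq> V" "A \<noteq> {}"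
  shows "\<exists>v\<in>A. card {u \<in> A. E v u} \<le> 5"
proof -
  obtain v where "v \<in> A" and smallest: "\<And>u. u \<in> A \<Longrightarrow> r v \<le> r u"
    using arg_min_if_finite[OF \<open>finite A\<close> \<open>A \<noteq> {}\<close>, of r] by (metis not_le)
  have "card {u \<in> A. E v u} \<le> 5"
  proof (rule card_disjoint_cballs_meeting_cball_le_5[where c = c and r = r])
    show "cball (c u) (r u) \<inter> cball (c v) (r v) \<noteq> {}" if "u \<in> {u \<in> A. E v u}" for u
      using that disks[of v u] assms(3,7) \<open>v \<in> A\<close> by (auto simp: Int_commute)
    show "cball (c u) (r u) \<inter> cball (c w) (r w) = {}"
      if "u \<in> {u \<in> A. E v u}" "w \<in> {u \<in> A. E v u}" "u \<noteq> w" for u w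
    proof -
      have "\<not> E u w"
        using that assms(2,7) \<open>v \<in> A\<close> unfolding triangle_free_def by blast
      then show ?thesis
        using that disks[of u w] assms(7) by auto
    qed
    show "0 \<le> r v"
      using r_nonneg assms(7) \<open>v \<in> A\<close> by blast
    show "r v \<le> r u" if "u \<in> {u \<in> A. E v u}" for u
      using that smallest by blast
  qed (fact assms(1))
  then show ?thesis
    using \<open>v \<in> A\<close> by blast
qed

theorem lemma5p2:
  fixes V :: "'a set" and E :: "'a \<Rightarrow> 'a \<Rightarrow> bool"
  assumes "simple_graph V E"
    and "circle_intersection_graph V E"
    and "triangle_free V E"
  shows "proper_colorable V E 6"
proof -
  have "finite V" and irrefl: "\<And>v. \<not> E v v"
    using assms(1) unfolding simple_graph_def by auto
  obtain c :: "'a \<Rightarrow> real^2" and r where r_pos: "\<forall>v\<in>V. 0 < r v"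
    and disks: "\<forall>u\<in>V. \<forall>v\<in>V. u \<noteq> v \<longrightarrow>
      (E u v \<longleftrightarrow> cball (c u) (r u) \<inter> cball (c v) (r v) \<noteq> {})"
    using assms(2) unfolding circle_intersection_graph_def by blast
  have "\<exists>v\<in>A. card {u \<in> A. E v u} \<le> 5" if "A \<subseteq> V" "A \<noteq> {}" for A
  proof (rule triangle_free_disk_graph_low_degree_vertex[where c = c and r = r, OF _ assms(3) irrefl])
    show "E u w \<longleftrightarrow> cball (c u) (r u) \<inter> cball (c w) (r w) \<noteq> {}"
      if "u \<in> V" "w \<in> V" "u \<noteq> w" for u w
      using that disks by simp
    show "0 \<le> r v" if "v \<in> V" for v
      using that r_pos by (simp add: less_imp_le)
    show "finite A"
      using \<open>finite V\<close> \<open>A \<subseteq> V\<close> by (rule finite_subset[rotated])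
  qed (use that in simp_all)
  then have "proper_colorable V E (Suc 5)"
    using degenerate_imp_proper_colorable[OF assms(1)] by blast
  then show ?thesis
    by simp
qed

end
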